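(* (a) There exist connected graphs $G$ with $O_{\rm SR}(G)=\mathcal{M}=O_{\rm R}(G)$. (b) There exist connected graphs $G$ with $O_{\rm SR}(G)=\mathcal{N}=O_{\rm R}(G)$. (c) There exist connected graphs $G$ with $O_{\rm SR}(G)=\mathcal{B}=O_{\rm R}(G)$. (d) There exist connected graphs $G$ with $O_{\rm SR}(G)=\mathcal{N}$ and $O_{\rm R}(G)=\mathcal{M}$. (e) There exist connected graphs $G$ with $O_{\rm SR}(G)=\mathcal{B}$ and $O_{\rm R}(G)=\mathcal{M}$. (f) There exist connected graphs $G$ with $O_{\rm SR}(G)=\mathcal{B}$ and $O_{\rm R}(G)=\mathcal{N}$.
   Context: All graphs are finite, simple and undirected; $d(x,y)$ is the shortest-path distance. For a connected graph $G$, a set $R\subseteq V(G)$ is a resolving set if for all distinct $x,y\in V(G)$ there is $z\in R$ with $d(x,z)\ne d(y,z)$; a set $S\subseteq V(G)$ is a strong resolving set if for all distinct $x,y\in V(G)$ there exists $z\in S$ such that $x$ lies on a $y$–$z$ geodesic or $y$ lies on an $x$–$z$ geodesic. In the Maker–Breaker resolving game (resp. strong resolving game) on $G$, Maker and Breaker alternately select a not-yet-chosen vertex of $G$; Maker wins if his selected vertices contain a resolving set (resp. strong resolving set) of $G$, and Breaker wins otherwise. In the M-game Maker moves first, in the B-game Breaker moves first. The outcome $O_{\rm R}(G)$ (resp. $O_{\rm SR}(G)$) is $\mathcal{M}$ if Maker has a winning strategy in both the M-game and the B-game, $\mathcal{B}$ if Breaker has a winning strategy in both, and $\mathcal{N}$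 if the first player has a winning strategy in each. *)

theory Defs
  imports Main
begin

definition simple_graph :: "nat set \<Rightarrow> (nat \<Rightarrow> nat \<Rightarrow> bool) \<Rightarrow> bool" where
  "simple_graph V E \<longleftrightarrow> finite V \<and>
     (\<forall>x y. E x y \<longrightarrow> x \<in> V \<and> y \<in> V \<and> x \<noteq> y \<and> E y x)"

definition is_walk :: "(nat \<Rightarrow> nat \<Rightarrow> bool) \<Rightarrow> nat list \<Rightarrow> bool" where
  "is_walk E p \<longleftrightarrow> p \<noteq> [] \<and> (\<forall>i. Suc i < length p \<longrightarrow> E (p ! i) (p ! Suc i))"

definition walk_between :: "(nat \<Rightarrow> nat \<Rightarrow> bool) \<Rightarrow> nat \<Rightarrow> nat \<Rightarrow> nat list \<Rightarrow> bool" where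
  "walk_between E x y p \<longleftrightarrow> is_walk E p \<and> hd p = x \<and> last p = y"

definition connected_graph :: "nat set \<Rightarrow> (nat \<Rightarrow> nat \<Rightarrow> bool) \<Rightarrow> bool" where
  "connected_graph V E \<longleftrightarrow> simple_graph V E \<and> V \<noteq> {} \<and>
     (\<forall>x\<in>V. \<forall>y\<in>V. \<exists>p. walk_between E x y p)"

definition dist :: "(nat \<Rightarrow> nat \<Rightarrow> bool) \<Rightarrow> nat \<Rightarrow> nat \<Rightarrow> nat" where
  "dist E x y = (LEAST n. \<exists>p. walk_between E x y p \<and> length p = Suc n)"

definition geodesic :: "(nat \<Rightarrow> nat \<Rightarrow> bool) \<Rightarrow> nat \<Rightarrow> nat \<Rightarrow> nat list \<Rightarrow> bool" where
  "geodesic E y z p \<longleftrightarrow> walk_between E y z p \<and> length p = Suc (dist E y z)"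

definition lies_on_geodesic :: "(nat \<Rightarrow> nat \<Rightarrow> bool) \<Rightarrow> nat \<Rightarrow> nat \<Rightarrow> nat \<Rightarrow> bool" where
  "lies_on_geodesic E x y z \<longleftrightarrow> (\<exists>p. geodesic E y z p \<and> x \<in> set p)"

definition resolving_set :: "nat set \<Rightarrow> (nat \<Rightarrow> nat \<Rightarrow> bool) \<Rightarrow> nat set \<Rightarrow> bool" where
  "resolving_set V E R \<longleftrightarrow> R \<subseteq> V \<and>
     (\<forall>x\<in>V. \<forall>y\<in>V. x \<noteq> y \<longrightarrow> (\<exists>z\<in>R. dist E x z \<noteq> dist E y z))"

definition strong_resolving_set :: "nat set \<Rightarrow> (nat \<Rightarrow> nat \<Rightarrow> bool) \<Rightarrow> nat set \<Rightarrow> bool" where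
  "strong_resolving_set V E S \<longleftrightarrow> S \<subseteq> V \<and>
     (\<forall>x\<in>V. \<forall>y\<in>V. x \<noteq> y \<longrightarrow>
        (\<exists>z\<in>S. lies_on_geodesic E x y z \<or> lies_on_geodesic E y x z))"

text \<open>Maker-Breaker game on board V with Maker's winning condition W (on Maker's set).
  Position: Maker's vertices M, Breaker's vertices B, and whether it is Maker's turn.
  maker_wins W V M B t: Maker has a winning strategy from this position.\<close>
inductive maker_wins :: "(nat set \<Rightarrow> bool) \<Rightarrow> nat set \<Rightarrow> nat set \<Rightarrow> nat set \<Rightarrow> bool \<Rightarrow> bool"
  for W :: "nat set \<Rightarrow> bool" and V :: "nat set" where
  terminal: "V - (M \<union> B) = {} \<Longrightarrow> W M \<Longrightarrow> maker_wins W V M B t"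
| maker_move: "v \<in> V - (M \<union> B) \<Longrightarrow> maker_wins W V (insert v M) B False \<Longrightarrow> maker_wins W V M B True"
| breaker_move: "V - (M \<union> B) \<noteq> {} \<Longrightarrow>
     (\<forall>v \<in> V - (M \<union> B). maker_wins W V M (insert v B) True) \<Longrightarrow> maker_wins W V M B False"

datatype outcome = OutM | OutN | OutB | OutSecond

text \<open>Outcome: M if Maker wins both the M-game (Maker first) and the B-game (Breaker first);
  B if Breaker wins both (i.e. Maker wins neither); N if the first player wins each.
  OutSecond (second player wins each) is included only for totality.\<close>
definition game_outcome :: "(nat set \<Rightarrow> bool) \<Rightarrow> nat set \<Rightarrow> outcome" where
  "game_outcome W V =
     (let mg = maker_wins W V {} {} True; bg = maker_wins W V {} {} False in
      if mg \<and> bg then OutM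
      else if \<not> mg \<and> \<not> bg then OutB
      else if mg \<and> \<not> bg then OutN
      else OutSecond)"

definition O_R :: "nat set \<Rightarrow> (nat \<Rightarrow> nat \<Rightarrow> bool) \<Rightarrow> outcome" where
  "O_R V E = game_outcome (\<lambda>M. \<exists>R \<subseteq> M. resolving_set V E R) V"

definition O_SR :: "nat set \<Rightarrow> (nat \<Rightarrow> nat \<Rightarrow> bool) \<Rightarrow> outcome" where
  "O_SR V E = game_outcome (\<lambda>M. \<exists>S \<subseteq> M. strong_resolving_set V E S) V"

end

theory Submission
  imports Defs
begin

text \<open>All six combinations are realised by graphs on at most five vertices: \<open>K\<^sub>1\<close>,
  \<open>K\<^sub>3\<close>, \<open>K\<^sub>4\<close>, the paw, the cricket and \<open>K\<^sub>4\<close> with a pendant vertex. Since \<open>x\<close>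
  lies on a \<open>y\<close>--\<open>z\<close> geodesic exactly when \<open>d(y,x) + d(x,z) = d(y,z)\<close>, both kinds of
  resolvability of Maker's set are conditions on the distance table, which breadth-first-search
  labellings certify; the two games on these small boards are then decided by exhaustive search
  of the game tree.\<close>

lemma is_walk_singleton [simp]: "is_walk E [a]"
  by (simp add: is_walk_def)

lemma is_walk_Cons_Cons [simp]: "is_walk E (a # b # q) \<longleftrightarrow> E a b \<and> is_walk E (b # q)"
  unfolding is_walk_def by (auto simp: less_Suc_eq_0_disj)

lemma is_walk_append_iff: "is_walk E (p @ x # q) \<longleftrightarrow> is_walk E (p @ [x]) \<and> is_walk E (x # q)"
  by (induction p rule: induct_list012) auto

lemma walk_between_append:
  assumes p: "walk_between E x y p" and q: "walk_between E y z q"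
  shows "walk_between E x z (butlast p @ q)"
proof -
  have "p \<noteq> []" and q_nonempty: "q \<noteq> []"
    using p q by (auto simp: walk_between_def is_walk_def)
  then have p_split: "p = butlast p @ [y]" and q_split: "q = y # tl q"
    using p q by (metis append_butlast_last_id walk_between_def, metis hd_Cons_tl walk_between_def)
  have "is_walk E (butlast p @ y # tl q)"
    using p q p_split q_split by (metis is_walk_append_iff walk_between_def)
  moreover have "hd (butlast p @ q) = hd p"
    by (metis hd_append list.sel(1) p_split q_split)
  ultimately show ?thesis
    using p q q_nonempty by (simp add: walk_between_def flip: q_split)
qed

lemma length_walk_between_append:
  "walk_between E x y p \<Longrightarrow> length (butlast p @ q) = length p + length q - 1"
  by (cases p) (auto simp: walk_between_def is_walk_def)

lemma dist_less_length: "walk_between E x y p \<Longrightarrow> dist E x y < length p"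
  unfolding dist_def
  by (rule order.strict_trans1[OF Least_le[of _ "length p - 1"]])
     (auto simp: walk_between_def is_walk_def)

lemma geodesic_exists: "walk_between E x y p \<Longrightarrow> \<exists>q. geodesic E x y q"
  unfolding geodesic_def dist_def
  by (rule LeastI_ex[of "\<lambda>n. \<exists>q. walk_between E x y q \<and> length q = Suc n"])
     (auto simp: walk_between_def is_walk_def intro!: exI[of _ "length p - 1"] exI[of _ p])

lemma dist_triangle:
  assumes "walk_between E x y p" and "walk_between E y z q"
  shows "dist E x z \<le> dist E x y + dist E y z"
proof -
  obtain p' q' where p': "geodesic E x y p'" and q': "geodesic E y z q'"
    using assms geodesic_exists by blast
  then have "dist E x z < length (butlast p' @ q')"
    by (intro dist_less_length walk_between_append) (auto simp: geodesic_def)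
  then show ?thesis
    using p' q' by (simp add: length_walk_between_append geodesic_def)
qed

lemma lies_on_geodesic_iff_dist:
  assumes yx: "walk_between E y x p" and xz: "walk_between E x z q"
  shows "lies_on_geodesic E x y z \<longleftrightarrow> dist E y x + dist E x z = dist E y z"
proof
  assume "lies_on_geodesic E x y z"
  then obtain g where g: "geodesic E y z g" and "x \<in> set g"
    unfolding lies_on_geodesic_def by blast
  then obtain g1 g2 where g_split: "g = g1 @ x # g2"
    by (meson split_list)
  have "is_walk E (g1 @ x # g2)"
    using g g_split by (simp add: geodesic_def walk_between_def)
  then have "is_walk E (g1 @ [x])" and "is_walk E (x # g2)"
    using is_walk_append_iff by blast+
  moreover have "hd (g1 @ [x]) = y"
    using g g_split by (cases g1) (auto simp: geodesic_def walk_between_def)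
  ultimately have "walk_between E y x (g1 @ [x])" and "walk_between E x z (x # g2)"
    using g g_split by (auto simp: geodesic_def walk_between_def)
  then have "dist E y x \<le> length g1" and "dist E x z \<le> length g2"
    using dist_less_length by fastforce+
  moreover have "length g = Suc (dist E y z)"
    using g by (simp add: geodesic_def)
  ultimately show "dist E y x + dist E x z = dist E y z"
    using dist_triangle[OF yx xz] g_split by simp
next
  assume sum: "dist E y x + dist E x z = dist E y z"
  obtain g1 g2 where g1: "geodesic E y x g1" and g2: "geodesic E x z g2"
    using yx xz geodesic_exists by blast
  then have "geodesic E y z (butlast g1 @ g2)"
    using sum walk_between_append
    by (auto simp: geodesic_def length_walk_between_append)
  moreover have "x \<in> set g2"
    using g2 by (cases g2) (auto simp: geodesic_def walk_between_def is_walk_def)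
  ultimately show "lies_on_geodesic E x y z"
    unfolding lies_on_geodesic_def by auto
qed

definition bfs_labelling :: "nat set \<Rightarrow> (nat \<Rightarrow> nat \<Rightarrow> bool) \<Rightarrow> nat \<Rightarrow> (nat \<Rightarrow> nat) \<Rightarrow> bool" where
  "bfs_labelling V E u d \<longleftrightarrow> d u = 0 \<and> (\<forall>x y. E x y \<longrightarrow> d y \<le> Suc (d x)) \<and>
     (\<forall>v\<in>V. v \<noteq> u \<longrightarrow> (\<exists>w\<in>V. E w v \<and> d v = Suc (d w)))"

lemma bfs_labelling_walk:
  assumes d: "bfs_labelling V E u d" and "v \<in> V"
  shows "\<exists>p. walk_between E u v p \<and> length p = Suc (d v)"
  using \<open>v \<in> V\<close>
proof (induction "d v" arbitrary: v)
  case 0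
  then have "v = u"
    using d by (force simp: bfs_labelling_def)
  then show ?case
    using 0 by (auto simp: walk_between_def intro!: exI[of _ "[u]"])
next
  case (Suc n)
  then have "v \<noteq> u"
    using d by (auto simp: bfs_labelling_def)
  then obtain w where w: "w \<in> V" "E w v" "d v = Suc (d w)"
    using d Suc.prems by (auto simp: bfs_labelling_def)
  then obtain p where p: "walk_between E u w p" "length p = Suc (d w)"
    using Suc by auto
  have "walk_between E w v [w, v]"
    using w by (simp add: walk_between_def)
  with p w show ?case
    by (intro exI[of _ "butlast p @ [w, v]"])
       (auto simp: walk_between_append length_walk_between_append)
qed

lemma label_last_less:
  assumes "\<forall>x y. E x y \<longrightarrow> d y \<le> Suc (d x)" and "is_walk E p"
  shows "d (last p) < d (hd p) + length p"
  using assms(2)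
proof (induction p rule: induct_list012)
  case (3 a b q)
  then show ?case
    using assms(1) by fastforce
qed (auto simp: is_walk_def)

lemma dist_eq_bfs_labelling:
  assumes d: "bfs_labelling V E u d" and "v \<in> V"
  shows "dist E u v = d v"
proof (rule antisym)
  obtain p where p: "walk_between E u v p" "length p = Suc (d v)"
    using bfs_labelling_walk[OF assms] by blast
  then show "dist E u v \<le> d v"
    using dist_less_length by fastforce
  obtain g where "geodesic E u v g"
    using p geodesic_exists by blast
  then show "d v \<le> dist E u v"
    using label_last_less[of E d g] d by (auto simp: geodesic_def walk_between_def bfs_labelling_def)
qed

lemma connected_graph_if_bfs_labellings:
  assumes "simple_graph V E" and "V \<noteq> {}" and "\<forall>u\<in>V. bfs_labelling V E u (D u)"
  shows "connected_graph V E"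
  using assms bfs_labelling_walk unfolding connected_graph_def by blast

definition resolves :: "(nat \<Rightarrow> nat \<Rightarrow> nat) \<Rightarrow> nat set \<Rightarrow> nat set \<Rightarrow> bool" where
  "resolves D V X \<longleftrightarrow> (\<forall>x\<in>V. \<forall>y\<in>V. x \<noteq> y \<longrightarrow> (\<exists>z\<in>X. D x z \<noteq> D y z))"

definition strongly_resolves :: "(nat \<Rightarrow> nat \<Rightarrow> nat) \<Rightarrow> nat set \<Rightarrow> nat set \<Rightarrow> bool" where
  "strongly_resolves D V X \<longleftrightarrow> (\<forall>x\<in>V. \<forall>y\<in>V. x \<noteq> y \<longrightarrow>
     (\<exists>z\<in>X. D y x + D x z = D y z \<or> D x y + D y z = D x z))"

lemma resolves_mono: "resolves D V R \<Longrightarrow> R \<subseteq> X \<Longrightarrow> resolves D V X"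
  unfolding resolves_def by blast

lemma strongly_resolves_mono: "strongly_resolves D V S \<Longrightarrow> S \<subseteq> X \<Longrightarrow> strongly_resolves D V X"
  unfolding strongly_resolves_def by blast

lemma resolves_cong:
  assumes "\<forall>u\<in>V. \<forall>v\<in>V. D u v = D' u v" and "X \<subseteq> V"
  shows "resolves D V X \<longleftrightarrow> resolves D' V X"
  using assms unfolding resolves_def subset_iff by auto

lemma strongly_resolves_cong:
  assumes "\<forall>u\<in>V. \<forall>v\<in>V. D u v = D' u v" and "X \<subseteq> V"
  shows "strongly_resolves D V X \<longleftrightarrow> strongly_resolves D' V X"
  using assms unfolding strongly_resolves_def subset_iff by auto

lemma resolving_set_iff_resolves: "resolving_set V E R \<longleftrightarrow> R \<subseteq> V \<and> resolves (dist E) V R"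
  unfolding resolving_set_def resolves_def by (rule refl)

lemma strong_resolving_set_iff_strongly_resolves:
  assumes "\<forall>u\<in>V. \<forall>v\<in>V. \<exists>p. walk_between E u v p"
  shows "strong_resolving_set V E S \<longleftrightarrow> S \<subseteq> V \<and> strongly_resolves (dist E) V S"
proof -
  have "lies_on_geodesic E x y z \<longleftrightarrow> dist E y x + dist E x z = dist E y z"
    if "x \<in> V" "y \<in> V" "z \<in> V" for x y z
    using that assms lies_on_geodesic_iff_dist by metis
  then show ?thesis
    unfolding strong_resolving_set_def strongly_resolves_def subset_iff by auto
qed

lemma ex_resolving_subset_iff:
  assumes dist: "\<forall>u\<in>V. \<forall>v\<in>V. dist E u v = D u v" and "X \<subseteq> V"
  shows "(\<exists>R\<subseteq>X. resolving_set V E R) \<longleftrightarrow> resolves D V X"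
proof
  assume "\<exists>R\<subseteq>X. resolving_set V E R"
  then have "resolves (dist E) V X"
    by (auto simp: resolving_set_iff_resolves intro: resolves_mono)
  then show "resolves D V X"
    using resolves_cong[OF dist \<open>X \<subseteq> V\<close>] by blast
next
  assume "resolves D V X"
  then have "resolving_set V E X"
    using resolves_cong[OF dist \<open>X \<subseteq> V\<close>] \<open>X \<subseteq> V\<close> by (simp add: resolving_set_iff_resolves)
  then show "\<exists>R\<subseteq>X. resolving_set V E R"
    by blast
qed

lemma ex_strong_resolving_subset_iff:
  assumes walks: "\<forall>u\<in>V. \<forall>v\<in>V. \<exists>p. walk_between E u v p"
    and dist: "\<forall>u\<in>V. \<forall>v\<in>V. dist E u v = D u v" and "X \<subseteq> V"
  shows "(\<exists>S\<subseteq>X. strong_resolving_set V E S) \<longleftrightarrow> strongly_resolves D V X"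
proof
  assume "\<exists>S\<subseteq>X. strong_resolving_set V E S"
  then have "strongly_resolves (dist E) V X"
    by (auto simp: strong_resolving_set_iff_strongly_resolves[OF walks] intro: strongly_resolves_mono)
  then show "strongly_resolves D V X"
    using strongly_resolves_cong[OF dist \<open>X \<subseteq> V\<close>] by blast
next
  assume "strongly_resolves D V X"
  then have "strong_resolving_set V E X"
    using strongly_resolves_cong[OF dist \<open>X \<subseteq> V\<close>] \<open>X \<subseteq> V\<close>
    by (simp add: strong_resolving_set_iff_strongly_resolves[OF walks])
  then show "\<exists>S\<subseteq>X. strong_resolving_set V E S"
    by blast
qed

lemma maker_wins_board_full:
  "V - (M \<union> B) = {} \<Longrightarrow> maker_wins W V M B t \<longleftrightarrow> W M"
  by (auto elim: maker_wins.cases intro: maker_wins.terminal)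

lemma maker_wins_Maker_to_move:
  "V - (M \<union> B) \<noteq> {} \<Longrightarrow>
   maker_wins W V M B True \<longleftrightarrow> (\<exists>v\<in>V - (M \<union> B). maker_wins W V (insert v M) B False)"
  by (auto elim: maker_wins.cases intro: maker_wins.maker_move)

lemma maker_wins_Breaker_to_move:
  "V - (M \<union> B) \<noteq> {} \<Longrightarrow>
   maker_wins W V M B False \<longleftrightarrow> (\<forall>v\<in>V - (M \<union> B). maker_wins W V M (insert v B) True)"
  by (auto elim: maker_wins.cases intro: maker_wins.breaker_move)

text \<open>Breaker's vertices need not be recorded: a position is determined by the list of free
  vertices and Maker's set.\<close>

function (sequential) maker_wins_list :: "(nat set \<Rightarrow> bool) \<Rightarrow> nat list \<Rightarrow> nat set \<Rightarrow> bool \<Rightarrow> bool" where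
  "maker_wins_list W [] M t = W M"
| "maker_wins_list W (v # vs) M True =
     list_ex (\<lambda>w. maker_wins_list W (remove1 w (v # vs)) (insert w M) False) (v # vs)"
| "maker_wins_list W (v # vs) M False =
     list_all (\<lambda>w. maker_wins_list W (remove1 w (v # vs)) M True) (v # vs)"
  by pat_completeness auto
termination
  by (relation "measure (\<lambda>(_, free, _, _). length free)")
     (auto simp: length_remove1 dest: length_pos_if_in_set)

lemma maker_wins_eq_list:
  assumes "distinct free" and "set free = V - (M \<union> B)" and "M \<subseteq> V"
    and "\<forall>X\<subseteq>V. W X = W' X"
  shows "maker_wins W V M B t \<longleftrightarrow> maker_wins_list W' free M t"
  using assms
proof (induction W' free M t arbitrary: B rule: maker_wins_list.induct)
  case (1 W' M t)
  then show ?case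
    by (simp add: maker_wins_board_full)
next
  case (2 W' v vs M)
  then have "V - (M \<union> B) \<noteq> {}"
    by auto
  then have "maker_wins W V M B True \<longleftrightarrow> (\<exists>w\<in>V - (M \<union> B). maker_wins W V (insert w M) B False)"
    by (rule maker_wins_Maker_to_move)
  also have "\<dots> \<longleftrightarrow> (\<exists>w\<in>set (v # vs). maker_wins_list W' (remove1 w (v # vs)) (insert w M) False)"
    using "2.prems" by (intro bex_cong "2.IH") auto
  finally show ?case
    by (simp add: list_ex_iff)
next
  case (3 W' v vs M)
  then have "V - (M \<union> B) \<noteq> {}"
    by auto
  then have "maker_wins W V M B False \<longleftrightarrow> (\<forall>w\<in>V - (M \<union> B). maker_wins W V M (insert w B) True)"
    by (rule maker_wins_Breaker_to_move)
  also have "\<dots> \<longleftrightarrow> (\<forall>w\<in>set (v # vs). maker_wins_list W' (remove1 w (v # vs)) M True)"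
    using "3.prems" by (intro ball_cong "3.IH") auto
  finally show ?case
    by (simp add: list_all_iff)
qed

definition outcome_of :: "bool \<Rightarrow> bool \<Rightarrow> outcome" where
  "outcome_of maker_first breaker_first =
     (if maker_first \<and> breaker_first then OutM
      else if \<not> maker_first \<and> \<not> breaker_first then OutB
      else if maker_first \<and> \<not> breaker_first then OutN
      else OutSecond)"

lemma game_outcome_eq_list:
  assumes "distinct free" and "set free = V" and "\<forall>X\<subseteq>V. W X = W' X"
  shows "game_outcome W V =
    outcome_of (maker_wins_list W' free {} True) (maker_wins_list W' free {} False)"
proof -
  have "maker_wins W V {} {} t \<longleftrightarrow> maker_wins_list W' free {} t" for t
    using assms by (intro maker_wins_eq_list) auto
  then show ?thesis
    unfolding game_outcome_def outcome_of_def Let_def by simp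
qed

lemma outcomes_by_bfs_labellings:
  assumes graph: "simple_graph V E" "V \<noteq> {}" and labels: "\<forall>u\<in>V. bfs_labelling V E u (D u)"
    and free: "distinct free" "set free = V"
    and strong: "outcome_of (maker_wins_list (strongly_resolves D V) free {} True)
      (maker_wins_list (strongly_resolves D V) free {} False) = a"
    and metric: "outcome_of (maker_wins_list (resolves D V) free {} True)
      (maker_wins_list (resolves D V) free {} False) = b"
  shows "connected_graph V E \<and> O_SR V E = a \<and> O_R V E = b"
proof -
  have dist: "\<forall>u\<in>V. \<forall>v\<in>V. dist E u v = D u v"
    using labels dist_eq_bfs_labelling by blast
  have walks: "\<forall>u\<in>V. \<forall>v\<in>V. \<exists>p. walk_between E u v p"
    using labels bfs_labelling_walk by blast
  have "O_SR V E = a"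
    unfolding O_SR_def strong[symmetric]
    using ex_strong_resolving_subset_iff[OF walks dist] by (intro game_outcome_eq_list[OF free]) auto
  moreover have "O_R V E = b"
    unfolding O_R_def metric[symmetric]
    using ex_resolving_subset_iff[OF dist] by (intro game_outcome_eq_list[OF free]) auto
  ultimately show ?thesis
    using connected_graph_if_bfs_labellings[OF graph labels] by blast
qed

definition complete_graph :: "nat \<Rightarrow> nat \<Rightarrow> nat \<Rightarrow> bool" where
  "complete_graph n x y \<longleftrightarrow> x < n \<and> y < n \<and> x \<noteq> y"

definition edges_of :: "(nat \<times> nat) list \<Rightarrow> nat \<Rightarrow> nat \<Rightarrow> bool" where
  "edges_of es x y \<longleftrightarrow> (x, y) \<in> set es \<or> (y, x) \<in> set es"

definition paw :: "nat \<Rightarrow> nat \<Rightarrow> bool" where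
  "paw = edges_of [(0, 1), (0, 2), (0, 3), (1, 2)]"

definition cricket :: "nat \<Rightarrow> nat \<Rightarrow> bool" where
  "cricket = edges_of [(0, 1), (0, 2), (0, 3), (0, 4), (1, 2)]"

definition K4_pendant :: "nat \<Rightarrow> nat \<Rightarrow> bool" where
  "K4_pendant = edges_of [(0, 1), (0, 2), (0, 3), (0, 4), (1, 2), (1, 3), (2, 3)]"

lemma K1_outcomes:
  "connected_graph {0} (complete_graph 1) \<and>
   O_SR {0} (complete_graph 1) = OutM \<and> O_R {0} (complete_graph 1) = OutM"
  apply (rule outcomes_by_bfs_labellings[where free = "[0]" and
        D = "\<lambda>x y. if x = y then 0 else 1"])
  apply (auto simp: simple_graph_def complete_graph_def bfs_labelling_def)[5]
  apply code_simp+
  done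

lemma K3_outcomes:
  "connected_graph {0, 1, 2} (complete_graph 3) \<and>
   O_SR {0, 1, 2} (complete_graph 3) = OutN \<and> O_R {0, 1, 2} (complete_graph 3) = OutN"
  apply (rule outcomes_by_bfs_labellings[where free = "[0, 1, 2]" and
        D = "\<lambda>x y. if x = y then 0 else 1"])
  apply (auto simp: simple_graph_def complete_graph_def bfs_labelling_def)[5]
  apply code_simp+
  done

lemma K4_outcomes:
  "connected_graph {0, 1, 2, 3} (complete_graph 4) \<and>
   O_SR {0, 1, 2, 3} (complete_graph 4) = OutB \<and> O_R {0, 1, 2, 3} (complete_graph 4) = OutB"
  apply (rule outcomes_by_bfs_labellings[where free = "[0, 1, 2, 3]" and
        D = "\<lambda>x y. if x = y then 0 else 1"])
  apply (auto simp: simple_graph_def complete_graph_def bfs_labelling_def)[5]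
  apply code_simp+
  done

lemma paw_outcomes:
  "connected_graph {0, 1, 2, 3} paw \<and> O_SR {0, 1, 2, 3} paw = OutN \<and> O_R {0, 1, 2, 3} paw = OutM"
  apply (rule outcomes_by_bfs_labellings[where free = "[0, 1, 2, 3]" and
        D = "\<lambda>x y. [[0, 1, 1, 1], [1, 0, 1, 2], [1, 1, 0, 2], [1, 2, 2, 0]] ! x ! y"])
  apply (auto simp: simple_graph_def paw_def edges_of_def bfs_labelling_def)[5]
  apply code_simp+
  done

lemma cricket_outcomes:
  "connected_graph {0, 1, 2, 3, 4} cricket \<and>
   O_SR {0, 1, 2, 3, 4} cricket = OutB \<and> O_R {0, 1, 2, 3, 4} cricket = OutM"
  apply (rule outcomes_by_bfs_labellings[where free = "[0, 1, 2, 3, 4]" and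
        D = "\<lambda>x y. [[0, 1, 1, 1, 1], [1, 0, 1, 2, 2], [1, 1, 0, 2, 2], [1, 2, 2, 0, 2],
                    [1, 2, 2, 2, 0]] ! x ! y"])
  apply (auto simp: simple_graph_def cricket_def edges_of_def bfs_labelling_def)[5]
  apply code_simp+
  done

lemma K4_pendant_outcomes:
  "connected_graph {0, 1, 2, 3, 4} K4_pendant \<and>
   O_SR {0, 1, 2, 3, 4} K4_pendant = OutB \<and> O_R {0, 1, 2, 3, 4} K4_pendant = OutN"
  apply (rule outcomes_by_bfs_labellings[where free = "[0, 1, 2, 3, 4]" and
        D = "\<lambda>x y. [[0, 1, 1, 1, 1], [1, 0, 1, 1, 2], [1, 1, 0, 1, 2], [1, 1, 1, 0, 2],
                    [1, 2, 2, 2, 0]] ! x ! y"])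
  apply (auto simp: simple_graph_def K4_pendant_def edges_of_def bfs_labelling_def)[5]
  apply code_simp+
  done

theorem mainTheorem6:
  shows "(\<exists>V E. connected_graph V E \<and> O_SR V E = OutM \<and> O_R V E = OutM)
       \<and> (\<exists>V E. connected_graph V E \<and> O_SR V E = OutN \<and> O_R V E = OutN)
       \<and> (\<exists>V E. connected_graph V E \<and> O_SR V E = OutB \<and> O_R V E = OutB)
       \<and> (\<exists>V E. connected_graph V E \<and> O_SR V E = OutN \<and> O_R V E = OutM)
       \<and> (\<exists>V E. connected_graph V E \<and> O_SR V E = OutB \<and> O_R V E = OutM)
       \<and> (\<exists>V E. connected_graph V E \<and> O_SR V E = OutB \<and> O_R V E = OutN)"
  using K1_outcomes K3_outcomes K4_outcomes paw_outcomes cricket_outcomes K4_pendant_outcomes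
  by blast

end
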